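(* Let $M$ be the allocation output by the online greedy algorithm on an instance of Model 1 and let $N$ be an optimal offline allocation. For a day $d_i$, let $X_i$ be the set of Type 2 agents that $N$ allocates on day $d_i$ and $Y_i$ the set of agents that $M$ allocates on day $d_i$. Then there exists an injective map $f:X_i\to Y_i$ such that whenever $f(a_p)=a_q$, we have $\alpha_p\le\alpha_q$.
   Context: Model 1: finite sets of agents $A$, categories $C$ and days $D=\{d_1,\dots,d_T\}$; each agent is eligible for a subset of categories; daily supply $s_i$ for day $d_i$; daily quota $q_{ik}$ for category $c_k$ on day $d_i$; each agent $a_j$ has a priority factor $\alpha_j>0$ and a set of available days; discount factor $\delta\in(0,1)$. An allocation maps each agent to a pair (eligible category, available day) or to $\emptyset$, with at most $q_{ik}$ agents getting $(c_k,d_i)$ and at most $s_i$ agents getting day $d_i$; agent $a_j$ allocated on day $d_i$ has utility $\alpha_j\delta^{i-1}$, and an optimal offline allocation maximizes total utility. The online greedy algorithm: on each day $d_i$, let $A_i$ be the agents available on $d_i$ not yet allocated; form the bipartite graph between $A_i$ and $C$ with an edge $(a_j,c_k)$ when $a_j$ is eligible for $c_k$, of weight $\alpha_j\delta^{i-1}$, agents of capacity $1$ and $c_k$ of capacity $q_{ik}$; compute a maximum-weight $b$-matching of size at most $s_i$ and allocate accordingly on day $d_i$. An agent allocated by $N$ is of Type 1 if $M$ allocates it on a strictly earlier day than $N$ does; every other agent allocated by $N$ is of Type 2. *)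

theory Defs
  imports Complex_Main
begin

text \<open>Model 1. Agents of type 'a (the finite set A), categories of type 'c (finite set C),
  days indexed by 1..T. elig a = categories agent a is eligible for, avail a = available days,
  s i = supply of day i, q i c = quota of category c on day i, alpha a = priority factor.
  An allocation is a map 'a => ('c * nat) option; Some (c,i) means (category c, day i),
  None means the empty allocation.\<close>

type_synonym ('a,'c) alloc = "'a \<Rightarrow> ('c \<times> nat) option"

definition valid_alloc ::
  "'a set \<Rightarrow> 'c set \<Rightarrow> nat \<Rightarrow> ('a \<Rightarrow> 'c set) \<Rightarrow> ('a \<Rightarrow> nat set)
   \<Rightarrow> (nat \<Rightarrow> nat) \<Rightarrow> (nat \<Rightarrow> 'c \<Rightarrow> nat) \<Rightarrow> ('a,'c) alloc \<Rightarrow> bool" where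
  "valid_alloc A C T elig avail s q X \<longleftrightarrow>
     (\<forall>a. X a \<noteq> None \<longrightarrow> a \<in> A) \<and>
     (\<forall>a c i. X a = Some (c, i) \<longrightarrow> c \<in> elig a \<and> c \<in> C \<and> i \<in> avail a \<and> i \<in> {1..T}) \<and>
     (\<forall>i c. card {a \<in> A. X a = Some (c, i)} \<le> q i c) \<and>
     (\<forall>i. card {a \<in> A. \<exists>c. X a = Some (c, i)} \<le> s i)"

definition utility :: "'a set \<Rightarrow> ('a \<Rightarrow> real) \<Rightarrow> real \<Rightarrow> ('a,'c) alloc \<Rightarrow> real" where
  "utility A alpha \<delta> X =
     (\<Sum>a\<in>A. case X a of None \<Rightarrow> 0 | Some (c, i) \<Rightarrow> alpha a * \<delta> ^ (i - 1))"

definition optimal_alloc ::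
  "'a set \<Rightarrow> 'c set \<Rightarrow> nat \<Rightarrow> ('a \<Rightarrow> 'c set) \<Rightarrow> ('a \<Rightarrow> nat set)
   \<Rightarrow> (nat \<Rightarrow> nat) \<Rightarrow> (nat \<Rightarrow> 'c \<Rightarrow> nat) \<Rightarrow> ('a \<Rightarrow> real) \<Rightarrow> real \<Rightarrow> ('a,'c) alloc \<Rightarrow> bool" where
  "optimal_alloc A C T elig avail s q alpha \<delta> N \<longleftrightarrow>
     valid_alloc A C T elig avail s q N \<and>
     (\<forall>N'. valid_alloc A C T elig avail s q N' \<longrightarrow>
        utility A alpha \<delta> N' \<le> utility A alpha \<delta> N)"

definition day_matching ::
  "'a set \<Rightarrow> 'c set \<Rightarrow> ('a \<Rightarrow> 'c set) \<Rightarrow> (nat \<Rightarrow> nat) \<Rightarrow> (nat \<Rightarrow> 'c \<Rightarrow> nat)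
   \<Rightarrow> nat \<Rightarrow> ('a \<Rightarrow> 'c option) \<Rightarrow> bool" where
  "day_matching Ai C elig s q i g \<longleftrightarrow>
     (\<forall>a c. g a = Some c \<longrightarrow> a \<in> Ai \<and> c \<in> C \<and> c \<in> elig a) \<and>
     (\<forall>c. card {a \<in> Ai. g a = Some c} \<le> q i c) \<and>
     card {a \<in> Ai. g a \<noteq> None} \<le> s i"

definition matching_weight ::
  "'a set \<Rightarrow> ('a \<Rightarrow> real) \<Rightarrow> real \<Rightarrow> nat \<Rightarrow> ('a \<Rightarrow> 'c option) \<Rightarrow> real" where
  "matching_weight Ai alpha \<delta> i g = (\<Sum>a\<in>Ai. if g a \<noteq> None then alpha a * \<delta> ^ (i - 1) else 0)"

definition remaining :: "'a set \<Rightarrow> ('a \<Rightarrow> nat set) \<Rightarrow> ('a,'c) alloc \<Rightarrow> nat \<Rightarrow> 'a set" where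
  "remaining A avail X i = {a \<in> A. i \<in> avail a \<and> \<not> (\<exists>c j. j < i \<and> X a = Some (c, j))}"

definition day_part :: "('a,'c) alloc \<Rightarrow> nat \<Rightarrow> 'a \<Rightarrow> 'c option" where
  "day_part X i a = (case X a of Some (c, j) \<Rightarrow> if j = i then Some c else None | None \<Rightarrow> None)"

text \<open>M is a possible output of the online greedy algorithm (any tie-breaking): on each day
  i in 1..T, the day-i part of M is a maximum-weight b-matching on the remaining agents, and
  M allocates nothing outside days 1..T.\<close>
definition greedy_output ::
  "'a set \<Rightarrow> 'c set \<Rightarrow> nat \<Rightarrow> ('a \<Rightarrow> 'c set) \<Rightarrow> ('a \<Rightarrow> nat set)
   \<Rightarrow> (nat \<Rightarrow> nat) \<Rightarrow> (nat \<Rightarrow> 'c \<Rightarrow> nat) \<Rightarrow> ('a \<Rightarrow> real) \<Rightarrow> real \<Rightarrow> ('a,'c) alloc \<Rightarrow> bool" where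
  "greedy_output A C T elig avail s q alpha \<delta> M \<longleftrightarrow>
     (\<forall>a c j. M a = Some (c, j) \<longrightarrow> j \<in> {1..T}) \<and>
     (\<forall>i\<in>{1..T}.
        let Ai = remaining A avail M i in
        day_matching Ai C elig s q i (day_part M i) \<and>
        (\<forall>g. day_matching Ai C elig s q i g \<longrightarrow>
             matching_weight Ai alpha \<delta> i g \<le> matching_weight Ai alpha \<delta> i (day_part M i)))"

definition type2_on_day :: "'a set \<Rightarrow> ('a,'c) alloc \<Rightarrow> ('a,'c) alloc \<Rightarrow> nat \<Rightarrow> 'a set" where
  "type2_on_day A M N i = {a \<in> A. (\<exists>c. N a = Some (c, i)) \<and>
       \<not> (\<exists>c' j. M a = Some (c', j) \<and> j < i)}"

definition allocated_on_day :: "'a set \<Rightarrow> ('a,'c) alloc \<Rightarrow> nat \<Rightarrow> 'a set" where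
  "allocated_on_day A X i = {a \<in> A. \<exists>c. X a = Some (c, i)}"

end

theory Submission
  imports Defs
begin

text \<open>For a fixed day i, the sets of remaining agents that admit an assignment to eligible
  categories within the quotas q i are the independent sets of a matroid. The Type 2 agents of N
  on day i are still remaining for the greedy algorithm and form an independent set of size at
  most s i, and so does the day-i allocation of M, which has maximum weight among all such sets.
  The matroid exchange property then shows that for every threshold t the greedy set contains at
  least as many agents of priority at least t as the Type 2 set; matching agents greedily from
  the highest priority downwards turns these counting inequalities into the injection.\<close>

definition capacitated_assignment ::
  "('a \<Rightarrow> 'c \<Rightarrow> bool) \<Rightarrow> ('c \<Rightarrow> nat) \<Rightarrow> 'a set \<Rightarrow> ('a \<Rightarrow> 'c) \<Rightarrow> bool" where
  "capacitated_assignment E Q S g \<longleftrightarrow>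
     (\<forall>a\<in>S. E a (g a)) \<and> (\<forall>c. card {a\<in>S. g a = c} \<le> Q c)"

definition assignable :: "('a \<Rightarrow> 'c \<Rightarrow> bool) \<Rightarrow> ('c \<Rightarrow> nat) \<Rightarrow> 'a set \<Rightarrow> bool" where
  "assignable E Q S \<longleftrightarrow> (\<exists>g. capacitated_assignment E Q S g)"

lemma capacitated_assignment_subset:
  assumes "finite S" "S' \<subseteq> S" "capacitated_assignment E Q S g"
  shows "capacitated_assignment E Q S' g"
proof -
  have "card {a\<in>S'. g a = c} \<le> card {a\<in>S. g a = c}" for c
    using assms(1,2) by (intro card_mono) auto
  with assms(2,3) show ?thesis
    unfolding capacitated_assignment_def by (meson order_trans subsetD)
qed

lemma assignable_subset: "finite S \<Longrightarrow> S' \<subseteq> S \<Longrightarrow> assignable E Q S \<Longrightarrow> assignable E Q S'"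
  unfolding assignable_def using capacitated_assignment_subset by blast

lemma capacitated_assignment_fun_upd:
  assumes "finite S" "capacitated_assignment E Q S g" "E a c"
    and "a \<notin> {x\<in>S. g x = c}" "card {x\<in>S. g x = c} < Q c"
  shows "capacitated_assignment E Q (insert a S) (g(a := c))"
proof -
  have "card {x\<in>insert a S. (g(a := c)) x = c'} \<le> Q c'" for c'
  proof (cases "c' = c")
    case True
    then have "{x\<in>insert a S. (g(a := c)) x = c'} = insert a {x\<in>S. g x = c}" by auto
    with True assms(1,4,5) show ?thesis by simp
  next
    case False
    then have "{x\<in>insert a S. (g(a := c)) x = c'} \<subseteq> {x\<in>S. g x = c'}" by auto
    then have "card {x\<in>insert a S. (g(a := c)) x = c'} \<le> card {x\<in>S. g x = c'}"
      using assms(1) by (intro card_mono) auto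
    with assms(2) show ?thesis unfolding capacitated_assignment_def by (meson order_trans)
  qed
  with assms(2,3) show ?thesis unfolding capacitated_assignment_def by auto
qed

lemma card_fiber_less_if_card_less:
  assumes "finite I" "finite J" "card J < card I"
  obtains c where "card {a\<in>J. g a = c} < card {a\<in>I. f a = c}"
proof -
  define V where "V = f ` I \<union> g ` J"
  have "finite V" using assms(1,2) by (simp add: V_def)
  have card_I: "card I = (\<Sum>c\<in>V. card {a\<in>I. f a = c})"
    using sum.group[OF assms(1) \<open>finite V\<close>, of f "\<lambda>_. 1::nat"] by (auto simp: V_def)
  have card_J: "card J = (\<Sum>c\<in>V. card {a\<in>J. g a = c})"
    using sum.group[OF assms(2) \<open>finite V\<close>, of g "\<lambda>_. 1::nat"] by (auto simp: V_def)
  have "\<not> (\<forall>c. card {a\<in>I. f a = c} \<le> card {a\<in>J. g a = c})"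
  proof
    assume "\<forall>c. card {a\<in>I. f a = c} \<le> card {a\<in>J. g a = c}"
    then have "(\<Sum>c\<in>V. card {a\<in>I. f a = c}) \<le> (\<Sum>c\<in>V. card {a\<in>J. g a = c})"
      by (intro sum_mono) blast
    with card_I card_J assms(3) show False by linarith
  qed
  with that show ?thesis by (auto simp: not_le)
qed

text \<open>Take a category c with fewer agents in J than in I, and an agent of I assigned to c that J
  does not assign to c. Either it is new to J, or it lies in J and can be reassigned to c, which
  removes a disagreement of the two assignments on I \<inter> J; induct on the number of these.\<close>

lemma assignable_augment:
  assumes "finite I" "finite J" "assignable E Q I" "assignable E Q J" "card J < card I"
  shows "\<exists>e\<in>I - J. assignable E Q (insert e J)"
proof -
  obtain gI where gI: "capacitated_assignment E Q I gI"
    using assms(3) unfolding assignable_def by blast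
  have "\<exists>e\<in>I - J. assignable E Q (insert e J)" if "capacitated_assignment E Q J gJ" for gJ
    using that
  proof (induction "card {a\<in>I \<inter> J. gI a \<noteq> gJ a}" arbitrary: gJ rule: less_induct)
    case less
    obtain c where c: "card {a\<in>J. gJ a = c} < card {a\<in>I. gI a = c}"
      using card_fiber_less_if_card_less[OF assms(1,2,5)] by blast
    have "\<not> {a\<in>I. gI a = c} \<subseteq> {a\<in>J. gJ a = c}"
    proof
      assume "{a\<in>I. gI a = c} \<subseteq> {a\<in>J. gJ a = c}"
      then have "card {a\<in>I. gI a = c} \<le> card {a\<in>J. gJ a = c}"
        using assms(2) by (intro card_mono) auto
      with c show False by simp
    qed
    then obtain a where a: "a \<in> I" "gI a = c" "a \<notin> {x\<in>J. gJ x = c}" by blast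
    have "E a c" using gI a(1,2) unfolding capacitated_assignment_def by blast
    moreover have "card {x\<in>J. gJ x = c} < Q c"
      using gI c unfolding capacitated_assignment_def by (meson order_less_le_trans)
    ultimately have upd: "capacitated_assignment E Q (insert a J) (gJ(a := c))"
      using capacitated_assignment_fun_upd[OF assms(2) less.prems] a(3) by blast
    show ?case
    proof (cases "a \<in> J")
      case False
      with upd a(1) show ?thesis unfolding assignable_def by blast
    next
      case True
      have fewer: "{x\<in>I \<inter> J. gI x \<noteq> (gJ(a := c)) x} = {x\<in>I \<inter> J. gI x \<noteq> gJ x} - {a}"
        and "a \<in> {x\<in>I \<inter> J. gI x \<noteq> gJ x}"
        using a True by auto
      moreover have "finite {x\<in>I \<inter> J. gI x \<noteq> gJ x}" using assms(1) by simp
      ultimately have "card {x\<in>I \<inter> J. gI x \<noteq> (gJ(a := c)) x} < card {x\<in>I \<inter> J. gI x \<noteq> gJ x}"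
        unfolding fewer by (blast intro: card_Diff1_less)
      moreover have "capacitated_assignment E Q J (gJ(a := c))"
        using upd True by (simp add: insert_absorb)
      ultimately show ?thesis by (rule less.hyps)
    qed
  qed
  with assms(4) show ?thesis unfolding assignable_def by blast
qed

lemma assignable_extend:
  assumes "finite K" "finite Y" "assignable E Q K" "assignable E Q Y"
  shows "\<exists>K'. K \<subseteq> K' \<and> K' \<subseteq> K \<union> Y \<and> card K' = max (card K) (card Y) \<and> assignable E Q K'"
  using assms
proof (induction "card Y - card K" arbitrary: K rule: less_induct)
  case less
  show ?case
  proof (cases "card Y \<le> card K")
    case True
    with less.prems(3) show ?thesis by (intro exI[of _ K]) (simp add: max_def)
  next
    case False
    then obtain e where e: "e \<in> Y - K" "assignable E Q (insert e K)"
      using assignable_augment[OF less.prems(2,1,4,3)] by auto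
    have card_e: "card (insert e K) = Suc (card K)" using e less.prems(1) by simp
    with False have "card Y - card (insert e K) < card Y - card K" by simp
    moreover have "finite (insert e K)" using less.prems(1) by simp
    ultimately obtain K' where "insert e K \<subseteq> K'" "K' \<subseteq> insert e K \<union> Y"
        "card K' = max (card (insert e K)) (card Y)" "assignable E Q K'"
      using less.hyps[OF _ _ less.prems(2) e(2) less.prems(4)] by blast
    with False e card_e show ?thesis by (intro exI[of _ K']) (auto simp: max_def)
  qed
qed

lemma sum_less_if_swapped_in_heavier:
  fixes w :: "'a \<Rightarrow> real"
  assumes "finite Y" "e \<notin> Y" "e \<in> K" "K \<subseteq> insert e Y" "{y\<in>Y. t \<le> w y} \<subseteq> K"
    and "card Y \<le> card K" "t \<le> w e" "0 < w e"
  shows "sum w Y < sum w K"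
proof -
  define D where "D = Y - K"
  have finK: "finite K" using finite_subset[OF assms(4)] assms(1) by simp
  have K_split: "K = insert e (K \<inter> Y)" using assms(3,4) by auto
  have sum_K: "sum w K = w e + sum w (K \<inter> Y)"
    using finK assms(2) by (subst K_split) simp
  have sum_Y: "sum w Y = sum w (K \<inter> Y) + sum w D"
    using sum.Int_Diff[OF assms(1), of w K] by (simp add: D_def Int_commute)
  have "card Y = card (K \<inter> Y) + card D"
    using card_Int_Diff[OF assms(1), of K] by (simp add: D_def Int_commute)
  moreover have "card K = Suc (card (K \<inter> Y))"
    using finK assms(2) by (subst K_split) simp
  ultimately have "card D \<le> Suc 0" using assms(6) by linarith
  have "sum w D < w e"
  proof (cases "D = {}")
    case True
    with assms(8) show ?thesis by simp
  next
    case False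
    then obtain d where "d \<in> D" by blast
    moreover have "finite D" using assms(1) by (simp add: D_def)
    ultimately have "D = {d}" using \<open>card D \<le> Suc 0\<close> by (auto simp: card_le_Suc0_iff_eq)
    moreover have "w d < t" using \<open>d \<in> D\<close> assms(5) by (auto simp: D_def)
    ultimately show ?thesis using assms(7) by simp
  qed
  with sum_K sum_Y show ?thesis by linarith
qed

lemma max_weight_assignable_upper_set_card_ge:
  fixes w :: "'a \<Rightarrow> real"
  assumes "finite U" "X \<subseteq> U" "Y \<subseteq> U"
    and "assignable E Q X" "card X \<le> b" "assignable E Q Y" "card Y \<le> b"
    and pos: "\<forall>a\<in>U. 0 < w a"
    and max: "\<And>K. K \<subseteq> U \<Longrightarrow> assignable E Q K \<Longrightarrow> card K \<le> b \<Longrightarrow> sum w K \<le> sum w Y"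
  shows "card {x\<in>X. t \<le> w x} \<le> card {y\<in>Y. t \<le> w y}"
proof (rule ccontr)
  define Xt where "Xt = {x\<in>X. t \<le> w x}"
  define Yt where "Yt = {y\<in>Y. t \<le> w y}"
  assume "\<not> card {x\<in>X. t \<le> w x} \<le> card {y\<in>Y. t \<le> w y}"
  then have less: "card Yt < card Xt" by (simp add: Xt_def Yt_def)
  have "finite X" "finite Y" using assms(1-3) finite_subset by auto
  then have fin: "finite X" "finite Y" "finite Xt" "finite Yt" by (simp_all add: Xt_def Yt_def)
  have "assignable E Q Xt" by (rule assignable_subset[OF fin(1) _ assms(4)]) (auto simp: Xt_def)
  moreover have "assignable E Q Yt" by (rule assignable_subset[OF fin(2) _ assms(6)]) (auto simp: Yt_def)
  ultimately obtain e where e: "e \<in> Xt - Yt" "assignable E Q (insert e Yt)"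
    using assignable_augment[OF fin(3,4) _ _ less] by blast
  have "t \<le> w e" "e \<notin> Y" "e \<in> U" using e assms(2) by (auto simp: Xt_def Yt_def)
  obtain K where K: "insert e Yt \<subseteq> K" "K \<subseteq> insert e Yt \<union> Y"
      "card K = max (card (insert e Yt)) (card Y)" "assignable E Q K"
    using assignable_extend[OF _ fin(2) e(2) assms(6)] fin(4) by auto
  have "card (insert e Yt) \<le> card X"
    using e less fin card_mono[of X Xt] by (simp add: Xt_def)
  then have "card K \<le> b" using K(3) assms(5,7) by linarith
  moreover have "K \<subseteq> U" using K(2) \<open>e \<in> U\<close> assms(3) by (auto simp: Yt_def)
  ultimately have "sum w K \<le> sum w Y" using max K(4) by blast
  moreover have "sum w Y < sum w K"
  proof (rule sum_less_if_swapped_in_heavier[OF fin(2) \<open>e \<notin> Y\<close>])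
    show "e \<in> K" "{y\<in>Y. t \<le> w y} \<subseteq> K" using K(1) by (auto simp: Yt_def)
    show "K \<subseteq> insert e Y" using K(2) by (auto simp: Yt_def)
    show "card Y \<le> card K" using K(3) by simp
    show "t \<le> w e" "0 < w e" using \<open>t \<le> w e\<close> \<open>e \<in> U\<close> pos by auto
  qed
  ultimately show False by simp
qed

lemma dominating_inj_on_if_upper_set_card_le:
  fixes w :: "'a \<Rightarrow> 'b::linorder"
  assumes "finite X" "finite Y" "\<And>t. card {x\<in>X. t \<le> w x} \<le> card {y\<in>Y. t \<le> w y}"
  shows "\<exists>f. inj_on f X \<and> f ` X \<subseteq> Y \<and> (\<forall>x\<in>X. w x \<le> w (f x))"
  using assms
proof (induction "card X" arbitrary: X Y rule: less_induct)
  case less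
  show ?case
  proof (cases "X = {}")
    case True
    then show ?thesis by auto
  next
    case False
    obtain x where x: "x \<in> X" "\<forall>x'\<in>X. w x' \<le> w x"
      using Max_in[of "w ` X"] Max_ge[of "w ` X"] False less.prems(1) by fastforce
    have "0 < card {x'\<in>X. w x \<le> w x'}" using x less.prems(1) by (auto simp: card_gt_0_iff)
    then have "0 < card {y\<in>Y. w x \<le> w y}" using less.prems(3)[of "w x"] by linarith
    then obtain y where y: "y \<in> Y" "w x \<le> w y" by (auto simp: card_gt_0_iff)
    have "card {x'\<in>X - {x}. t \<le> w x'} \<le> card {y'\<in>Y - {y}. t \<le> w y'}" for t
    proof (cases "t \<le> w x")
      case True
      have "{x'\<in>X - {x}. t \<le> w x'} = {x'\<in>X. t \<le> w x'} - {x}"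
        "{y'\<in>Y - {y}. t \<le> w y'} = {y'\<in>Y. t \<le> w y'} - {y}"
        "x \<in> {x'\<in>X. t \<le> w x'}" "y \<in> {y'\<in>Y. t \<le> w y'}"
        using x y True by auto
      with less.prems show ?thesis by (simp add: card_Diff_singleton diff_le_mono)
    next
      case False
      then have "{x'\<in>X - {x}. t \<le> w x'} = {}" using x by (auto dest: order_trans)
      then show ?thesis by (metis card.empty le0)
    qed
    moreover have "card (X - {x}) < card X" using less.prems(1) x(1) by (rule card_Diff1_less)
    ultimately obtain f where f: "inj_on f (X - {x})" "f ` (X - {x}) \<subseteq> Y - {y}"
        "\<forall>x'\<in>X - {x}. w x' \<le> w (f x')"
      using less.hyps[of "X - {x}" "Y - {y}"] less.prems by auto
    have "inj_on (f(x := y)) X"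
    proof -
      have "inj_on (f(x := y)) (X - {x})" using f(1) by (simp add: inj_on_def)
      moreover have "y \<notin> (f(x := y)) ` (X - {x})" using f(2) by auto
      ultimately show ?thesis using x(1) inj_on_insert[of "f(x := y)" x "X - {x}"]
        by (simp add: insert_absorb)
    qed
    with f y show ?thesis by (intro exI[of _ "f(x := y)"]) auto
  qed
qed

abbreviation eligible_in :: "'c set \<Rightarrow> ('a \<Rightarrow> 'c set) \<Rightarrow> 'a \<Rightarrow> 'c \<Rightarrow> bool" where
  "eligible_in C elig \<equiv> \<lambda>a c. c \<in> C \<and> c \<in> elig a"

lemma matching_weight_eq:
  assumes "finite Ai"
  shows "matching_weight Ai alpha \<delta> i g = \<delta> ^ (i - 1) * sum alpha {a\<in>Ai. g a \<noteq> None}"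
  unfolding matching_weight_def sum.inter_filter[OF assms] sum_distrib_left
  by (intro sum.cong) auto

lemma day_matching_of_assignment:
  assumes "K \<subseteq> Ai" "capacitated_assignment (eligible_in C elig) (q i) K g"
    and "card K \<le> s i"
  shows "day_matching Ai C elig s q i (\<lambda>a. if a \<in> K then Some (g a) else None)"
proof -
  have "{a\<in>Ai. (if a \<in> K then Some (g a) else None) = Some c} = {a\<in>K. g a = c}" for c
    using assms(1) by auto
  moreover have "{a\<in>Ai. (if a \<in> K then Some (g a) else None) \<noteq> None} = K"
    using assms(1) by auto
  ultimately show ?thesis
    using assms unfolding day_matching_def capacitated_assignment_def by (auto split: if_splits)
qed

lemma assignment_of_day_matching:
  assumes "day_matching Ai C elig s q i h"
  shows "capacitated_assignment (eligible_in C elig) (q i)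
           {a\<in>Ai. h a \<noteq> None} (\<lambda>a. the (h a))"
proof -
  have "{a\<in>{a\<in>Ai. h a \<noteq> None}. the (h a) = c} = {a\<in>Ai. h a = Some c}" for c
    by auto
  with assms show ?thesis unfolding day_matching_def capacitated_assignment_def by auto
qed

lemma greedy_day_allocation_max_weight:
  fixes alpha :: "'a \<Rightarrow> real"
  assumes "finite A" "0 < \<delta>" "greedy_output A C T elig avail s q alpha \<delta> M" "i \<in> {1..T}"
  defines "Ai \<equiv> remaining A avail M i" and "Y \<equiv> allocated_on_day A M i"
  shows "Y \<subseteq> Ai" and "assignable (eligible_in C elig) (q i) Y" and "card Y \<le> s i"
    and "\<And>K. K \<subseteq> Ai \<Longrightarrow> assignable (eligible_in C elig) (q i) K \<Longrightarrow> card K \<le> s i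
           \<Longrightarrow> sum alpha K \<le> sum alpha Y"
proof -
  have dm: "day_matching Ai C elig s q i (day_part M i)"
    and opt: "\<And>g. day_matching Ai C elig s q i g \<Longrightarrow>
       matching_weight Ai alpha \<delta> i g \<le> matching_weight Ai alpha \<delta> i (day_part M i)"
    using assms(3,4) unfolding greedy_output_def Ai_def Let_def by auto
  have "finite Ai" using assms(1) by (simp add: Ai_def remaining_def)
  have day_part: "day_part M i a \<noteq> None \<longleftrightarrow> (\<exists>c. M a = Some (c, i))" for a
    by (auto simp: day_part_def split: option.splits)
  have Y_eq: "Y = {a\<in>Ai. day_part M i a \<noteq> None}"
    using dm day_part unfolding Y_def Ai_def allocated_on_day_def remaining_def day_matching_def
    by blast
  show "Y \<subseteq> Ai" by (simp add: Y_eq)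
  show "assignable (eligible_in C elig) (q i) Y"
    using assignment_of_day_matching[OF dm] by (auto simp: assignable_def Y_eq)
  show "card Y \<le> s i" using dm by (simp add: day_matching_def Y_eq)
  fix K assume K: "K \<subseteq> Ai" "assignable (eligible_in C elig) (q i) K" "card K \<le> s i"
  then obtain g where "capacitated_assignment (eligible_in C elig) (q i) K g"
    by (auto simp: assignable_def)
  then have "matching_weight Ai alpha \<delta> i (\<lambda>a. if a \<in> K then Some (g a) else None)
      \<le> matching_weight Ai alpha \<delta> i (day_part M i)"
    using opt day_matching_of_assignment K(1,3) by blast
  moreover have "{a\<in>Ai. (if a \<in> K then Some (g a) else None) \<noteq> None} = K" using K(1) by auto
  ultimately have "\<delta> ^ (i - 1) * sum alpha K \<le> \<delta> ^ (i - 1) * sum alpha Y"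
    by (simp only: matching_weight_eq[OF \<open>finite Ai\<close>] Y_eq)
  then show "sum alpha K \<le> sum alpha Y" using assms(2) by simp
qed

lemma type2_on_day_assignable:
  fixes M :: "('a, 'c) alloc" and i :: nat
  assumes "finite A" "valid_alloc A C T elig avail s q N"
  defines "X \<equiv> type2_on_day A M N i"
  shows "X \<subseteq> remaining A avail M i" and "assignable (eligible_in C elig) (q i) X"
    and "card X \<le> s i"
proof -
  show "X \<subseteq> remaining A avail M i"
    using assms(2) by (fastforce simp: X_def type2_on_day_def remaining_def valid_alloc_def)
  have "card X \<le> card {a\<in>A. \<exists>c. N a = Some (c, i)}"
    using assms(1) by (intro card_mono) (auto simp: X_def type2_on_day_def)
  with assms(2) show "card X \<le> s i" unfolding valid_alloc_def by (meson order_trans)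
  define g where "g a = fst (the (N a))" for a
  have N_X: "N a = Some (g a, i)" if "a \<in> X" for a
    using that by (auto simp: X_def type2_on_day_def g_def)
  have "card {a\<in>X. g a = c} \<le> q i c" for c
  proof -
    have "card {a\<in>X. g a = c} \<le> card {a\<in>A. N a = Some (c, i)}"
      using assms(1) N_X by (intro card_mono) (auto simp: X_def type2_on_day_def)
    with assms(2) show ?thesis unfolding valid_alloc_def by (meson order_trans)
  qed
  moreover have "\<forall>a\<in>X. g a \<in> C \<and> g a \<in> elig a"
    using N_X assms(2) unfolding valid_alloc_def by blast
  ultimately show "assignable (eligible_in C elig) (q i) X"
    unfolding assignable_def capacitated_assignment_def by blast
qed

theorem lemma3:
  fixes A :: "'a set" and C :: "'c set" and T :: nat
    and elig :: "'a \<Rightarrow> 'c set" and avail :: "'a \<Rightarrow> nat set"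
    and s :: "nat \<Rightarrow> nat" and q :: "nat \<Rightarrow> 'c \<Rightarrow> nat"
    and alpha :: "'a \<Rightarrow> real" and \<delta> :: real
    and M N :: "('a,'c) alloc" and i :: nat
  assumes "finite A" and "finite C"
    and "\<forall>a\<in>A. elig a \<subseteq> C" and "\<forall>a\<in>A. avail a \<subseteq> {1..T}"
    and "\<forall>a\<in>A. alpha a > 0" and "0 < \<delta>" and "\<delta> < 1"
    and "greedy_output A C T elig avail s q alpha \<delta> M"
    and "optimal_alloc A C T elig avail s q alpha \<delta> N"
    and "i \<in> {1..T}"
  shows "\<exists>f. inj_on f (type2_on_day A M N i) \<and>
             f ` (type2_on_day A M N i) \<subseteq> allocated_on_day A M i \<and>
             (\<forall>a\<in>type2_on_day A M N i. alpha a \<le> alpha (f a))"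
proof -
  have N: "valid_alloc A C T elig avail s q N" using assms(9) by (simp add: optimal_alloc_def)
  have fin: "finite (remaining A avail M i)" using assms(1) by (simp add: remaining_def)
  note X = type2_on_day_assignable[OF assms(1) N, where M = M and i = i]
  note Y = greedy_day_allocation_max_weight[OF assms(1,6,8,10)]
  have "\<forall>a\<in>remaining A avail M i. 0 < alpha a" using assms(5) by (simp add: remaining_def)
  then have "card {x\<in>type2_on_day A M N i. t \<le> alpha x} \<le> card {y\<in>allocated_on_day A M i. t \<le> alpha y}"
    for t
    using max_weight_assignable_upper_set_card_ge[OF fin X(1) Y(1) X(2,3) Y(2,3)] Y(4) by blast
  moreover have "finite (type2_on_day A M N i)" "finite (allocated_on_day A M i)"
    using fin X(1) Y(1) finite_subset by blast+
  ultimately show ?thesis using dominating_inj_on_if_upper_set_card_le by blast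
qed

end
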